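(* Let $\mathcal{Z}\subset\mathbb{R}^d$ be a convex compact set with $\max_{\mathbf{z},\mathbf{z}'\in\mathcal{Z}}\|\mathbf{z}-\mathbf{z}'\|\le D$. Let $F:\mathcal{Z}\to\mathbb{R}^d$ be single-valued and $\mu$-strongly monotone, of the form $F(\mathbf{z})=\frac1n\sum_{i=1}^nF_i(\mathbf{z})$ with each $F_i$ $L$-Lipschitz continuous. Fix $\mathbf{w}\in\mathcal{Z}$, $\mathbf{w}^{(0)}\in\mathcal{Z}$ and an integer $T\ge1$, and run the following SVRG method: set $\eta=\mu/(4(L+\mu)^2)$, $S=\lceil4\log(4)(L+\mu)^2/\mu^2\rceil$, $B(\mathbf{z})=F(\mathbf{z})-\mu(\mathbf{z}-\mathbf{w})$, $B_i(\mathbf{z})=\frac1nF_i(\mathbf{z})-\frac{\mu}{n}(\mathbf{z}-\mathbf{w})$, and let $R(\mathbf{u}):=\arg\min_{\mathbf{z}'\in\mathcal{Z}}\frac{1}{2\eta}\|\mathbf{z}'-\mathbf{u}\|^2+\frac{\mu}{2}\|\mathbf{z}'-\mathbf{w}\|^2$. For $t=0,\dots,T-1$: set $\bar B^{(t)}=B(\mathbf{w}^{(t)})$ and $\mathbf{z}^{(0)}=\mathbf{w}^{(t)}$; for $s=0,\dots,S-1$, sample $i$ uniformly from $\{1,\dots,n\}$ (independently), set $B^{(s)}=\bar B^{(t)}-nB_i(\mathbf{w}^{(t)})+nB_i(\mathbf{z}^{(s)})$ and $\mathbf{z}^{(s+1)}=R(\mathbf{z}^{(s)}-\eta B^{(s)})$;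 then set $\mathbf{w}^{(t+1)}=\mathbf{z}^{(S)}$. Output $\bar{\mathbf{z}}=\mathrm{Proj}_{\mathcal{Z}}\big(\mathbf{w}^{(T)}-F(\mathbf{w}^{(T)})/(\sqrt2L)\big)$. Then $$\mathbb{E}\Big[\max_{\mathbf{z}\in\mathcal{Z}}F(\bar{\mathbf{z}})^{\top}(\bar{\mathbf{z}}-\mathbf{z})\Big]\le D^2L(2+\sqrt2)(\sqrt3/2)^T,$$ and, with $\mathbf{w}_*$ the solution of $\mathrm{SVI}(F,\mathcal{Z})$, $$\mu\,\mathbb{E}\|\bar{\mathbf{z}}-\mathbf{w}_*\|^2\le D^2L(2+\sqrt2)(\sqrt3/2)^T.$$
   Context: $\mathrm{Proj}_{\mathcal{Z}}$ is the Euclidean projection. $F$ is $\mu$-strongly monotone if $\langle F(\mathbf{z})-F(\mathbf{z}'),\mathbf{z}-\mathbf{z}'\rangle\ge\mu\|\mathbf{z}-\mathbf{z}'\|^2$ for all $\mathbf{z},\mathbf{z}'\in\mathcal{Z}$; $\mathrm{SVI}(F,\mathcal{Z})$ asks for $\mathbf{w}_*\in\mathcal{Z}$ with $\langle F(\mathbf{w}_* ),\mathbf{z}-\mathbf{w}_*\rangle\ge0$ for all $\mathbf{z}\in\mathcal{Z}$. The map $R$ is the resolvent $(I+\eta A)^{-1}$ of $A(\mathbf{z})=\mu(\mathbf{z}-\mathbf{w})+N_{\mathcal{Z}}(\mathbf{z})$, with $N_{\mathcal{Z}}$ the normal cone of $\mathcal{Z}$. *)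

theory Defs
  imports "HOL-Analysis.Analysis" "HOL-Probability.Probability"
begin

definition avgF :: "nat \<Rightarrow> (nat \<Rightarrow> 'a::real_vector \<Rightarrow> 'a) \<Rightarrow> 'a \<Rightarrow> 'a" where
  "avgF n Fi z = (1 / real n) *\<^sub>R (\<Sum>i<n. Fi i z)"

definition strongly_monotone_on :: "'a::real_inner set \<Rightarrow> real \<Rightarrow> ('a \<Rightarrow> 'a) \<Rightarrow> bool" where
  "strongly_monotone_on Z \<mu> F \<longleftrightarrow>
     (\<forall>z\<in>Z. \<forall>z'\<in>Z. (F z - F z') \<bullet> (z - z') \<ge> \<mu> * (norm (z - z'))\<^sup>2)"

definition resolv :: "'a::real_inner set \<Rightarrow> real \<Rightarrow> real \<Rightarrow> 'a \<Rightarrow> 'a \<Rightarrow> 'a" where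
  "resolv Z \<eta> \<mu> w u =
     (THE z'. z' \<in> Z \<and> (\<forall>z\<in>Z.
        1 / (2 * \<eta>) * (norm (z' - u))\<^sup>2 + \<mu> / 2 * (norm (z' - w))\<^sup>2
        \<le> 1 / (2 * \<eta>) * (norm (z - u))\<^sup>2 + \<mu> / 2 * (norm (z - w))\<^sup>2))"

definition svrgB :: "nat \<Rightarrow> (nat \<Rightarrow> 'a::real_vector \<Rightarrow> 'a) \<Rightarrow> real \<Rightarrow> 'a \<Rightarrow> 'a \<Rightarrow> 'a" where
  "svrgB n Fi \<mu> w z = avgF n Fi z - \<mu> *\<^sub>R (z - w)"

definition svrgBi :: "nat \<Rightarrow> (nat \<Rightarrow> 'a::real_vector \<Rightarrow> 'a) \<Rightarrow> real \<Rightarrow> 'a \<Rightarrow> nat \<Rightarrow> 'a \<Rightarrow> 'a" where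
  "svrgBi n Fi \<mu> w i z = (1 / real n) *\<^sub>R Fi i z - (\<mu> / real n) *\<^sub>R (z - w)"

primrec svrg_inner :: "nat \<Rightarrow> (nat \<Rightarrow> 'a::real_inner \<Rightarrow> 'a) \<Rightarrow> 'a set \<Rightarrow> real \<Rightarrow> real \<Rightarrow> 'a
    \<Rightarrow> 'a \<Rightarrow> (nat \<Rightarrow> nat) \<Rightarrow> nat \<Rightarrow> 'a" where
  "svrg_inner n Fi Z \<mu> \<eta> w wt idx 0 = wt"
| "svrg_inner n Fi Z \<mu> \<eta> w wt idx (Suc s) =
     (let z = svrg_inner n Fi Z \<mu> \<eta> w wt idx s;
          i = idx s;
          Bs = svrgB n Fi \<mu> w wt - real n *\<^sub>R svrgBi n Fi \<mu> w i wt
               + real n *\<^sub>R svrgBi n Fi \<mu> w i z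
      in resolv Z \<eta> \<mu> w (z - \<eta> *\<^sub>R Bs))"

primrec svrg_outer :: "nat \<Rightarrow> (nat \<Rightarrow> 'a::real_inner \<Rightarrow> 'a) \<Rightarrow> 'a set \<Rightarrow> real \<Rightarrow> real \<Rightarrow> 'a
    \<Rightarrow> 'a \<Rightarrow> nat \<Rightarrow> (nat \<Rightarrow> nat) \<Rightarrow> nat \<Rightarrow> 'a" where
  "svrg_outer n Fi Z \<mu> \<eta> w w0 S idx 0 = w0"
| "svrg_outer n Fi Z \<mu> \<eta> w w0 S idx (Suc t) =
     svrg_inner n Fi Z \<mu> \<eta> w (svrg_outer n Fi Z \<mu> \<eta> w w0 S idx t) (\<lambda>s. idx (t * S + s)) S"

definition svrg_output :: "nat \<Rightarrow> (nat \<Rightarrow> 'a::euclidean_space \<Rightarrow> 'a) \<Rightarrow> 'a set \<Rightarrow> real \<Rightarrow> real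
    \<Rightarrow> 'a \<Rightarrow> 'a \<Rightarrow> nat \<Rightarrow> (nat \<Rightarrow> nat) \<Rightarrow> 'a" where
  "svrg_output n Fi Z \<mu> L w w0 T idx =
     (let \<eta> = \<mu> / (4 * (L + \<mu>)\<^sup>2);
          S = nat \<lceil>4 * ln 4 * (L + \<mu>)\<^sup>2 / \<mu>\<^sup>2\<rceil>;
          wT = svrg_outer n Fi Z \<mu> \<eta> w w0 S idx T
      in closest_point Z (wT - (1 / (sqrt 2 * L)) *\<^sub>R avgF n Fi wT))"

definition svrg_samples :: "nat \<Rightarrow> real \<Rightarrow> real \<Rightarrow> nat \<Rightarrow> (nat \<Rightarrow> nat) pmf" where
  "svrg_samples n \<mu> L T =
     (let S = nat \<lceil>4 * ln 4 * (L + \<mu>)\<^sup>2 / \<mu>\<^sup>2\<rceil>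
      in Pi_pmf {..<T * S} 0 (\<lambda>_. pmf_of_set {..<n}))"

end

theory Submission
  imports Defs
begin

text \<open>
  Completing the square shows that the resolvent \<open>R\<close> is the projection onto \<open>Z\<close> of
  \<open>(u + \<eta>\<mu> w) / (1 + \<eta>\<mu>)\<close>; hence it is a \<open>1 / (1 + \<eta>\<mu>)\<close>-contraction, and it fixes
  \<open>ws - \<eta> B(ws)\<close> because \<open>ws\<close> solves the variational inequality. Comparing an inner step with this
  fixed point, the variance-reduced estimator is unbiased with variance at most
  \<open>(L + \<mu>)\<^sup>2 |z\<^sub>s - w\<^sub>t|\<^sup>2\<close>, and \<open>\<eta>\<^sup>2 (L + \<mu>)\<^sup>2 = \<eta>\<mu> / 4\<close> gives, with \<open>\<rho> = 1 / (1 + \<eta>\<mu>)\<close>,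
  \<open>E|z\<^sub>s\<^sub>+\<^sub>1 - ws|\<^sup>2 \<le> \<rho>\<^sup>2 ((1 + 3\<eta>\<mu>/4) E|z\<^sub>s - ws|\<^sup>2 + (\<eta>\<mu>/2) E|w\<^sub>t - ws|\<^sup>2)\<close>.
  By induction \<open>E|z\<^sub>s - ws|\<^sup>2 \<le> (2/5 + 3/5 \<rho>\<^sup>s) E|w\<^sub>t - ws|\<^sup>2\<close>, and the choice of \<open>S\<close> makes
  \<open>\<rho>\<^sup>S \<le> 7/12\<close>, a factor \<open>3/4\<close> per epoch. For the output \<open>zbar\<close>, firm nonexpansiveness of the
  projection gives \<open>|w\<^sub>T - zbar| \<le> sqrt 2 |w\<^sub>T - ws|\<close>, which bounds the gap at \<open>zbar\<close> by
  \<open>(2 + sqrt 2) L D |w\<^sub>T - ws|\<close>; strong monotonicity bounds \<open>\<mu> |zbar - ws|\<^sup>2\<close> by the gap, and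
  \<open>E|w\<^sub>T - ws| \<le> sqrt (E|w\<^sub>T - ws|\<^sup>2) \<le> (sqrt 3 / 2)\<^sup>T D\<close>.
\<close>

section \<open>Inner-product inequalities\<close>

lemma power2_norm_diff:
  fixes x y :: "'a::real_inner"
  shows "(norm (x - y))\<^sup>2 = (norm x)\<^sup>2 - 2 * inner x y + (norm y)\<^sup>2"
  unfolding power2_norm_eq_inner by (simp add: inner_diff inner_commute)

lemma power2_norm_diff_le:
  fixes x y :: "'a::real_normed_vector"
  shows "(norm (x - y))\<^sup>2 \<le> 2 * (norm x)\<^sup>2 + 2 * (norm y)\<^sup>2"
proof -
  have "(norm (x - y))\<^sup>2 \<le> (norm x + norm y)\<^sup>2"
    by (simp add: norm_triangle_ineq4 power_mono)
  then show ?thesis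
    using zero_le_power2[of "norm x - norm y"] unfolding power2_diff power2_sum by linarith
qed

lemma sum_power2_norm_diff_mean_zero:
  fixes A :: "'a::real_inner"
  assumes "sum W I = 0"
  shows "(\<Sum>i\<in>I. (norm (A - W i))\<^sup>2) = card I * (norm A)\<^sup>2 + (\<Sum>i\<in>I. (norm (W i))\<^sup>2)"
proof -
  have "(\<Sum>i\<in>I. (norm (A - W i))\<^sup>2)
      = card I * (norm A)\<^sup>2 - 2 * inner A (sum W I) + (\<Sum>i\<in>I. (norm (W i))\<^sup>2)"
    by (simp add: power2_norm_diff sum.distrib sum_subtractf inner_sum_right sum_distrib_left)
  with assms show ?thesis by simp
qed

lemma sum_power2_norm_centered_le:
  fixes Y :: "'i \<Rightarrow> 'a::real_inner"
  assumes "sum Y I = card I *\<^sub>R m"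
  shows "(\<Sum>i\<in>I. (norm (Y i - m))\<^sup>2) \<le> (\<Sum>i\<in>I. (norm (Y i))\<^sup>2)"
proof -
  have "(\<Sum>i\<in>I. (norm (Y i - m))\<^sup>2)
      = (\<Sum>i\<in>I. (norm (Y i))\<^sup>2) - 2 * inner (sum Y I) m + card I * (norm m)\<^sup>2"
    by (simp add: power2_norm_diff sum.distrib sum_subtractf inner_sum_left sum_distrib_left)
  also have "\<dots> = (\<Sum>i\<in>I. (norm (Y i))\<^sup>2) - card I * (norm m)\<^sup>2"
    using assms by (simp add: power2_norm_eq_inner)
  finally show ?thesis by simp
qed

lemma power2_norm_monotone_step_le:
  fixes x d :: "'a::real_inner"
  assumes "0 \<le> inner d x" and "norm d \<le> M * norm x" and "0 \<le> \<eta>"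
  shows "(norm (x - \<eta> *\<^sub>R d))\<^sup>2 \<le> (1 + \<eta>\<^sup>2 * M\<^sup>2) * (norm x)\<^sup>2"
proof -
  have "(norm d)\<^sup>2 \<le> M\<^sup>2 * (norm x)\<^sup>2"
    using assms(2) by (metis norm_ge_zero power_mono power_mult_distrib)
  then have "\<eta>\<^sup>2 * (norm d)\<^sup>2 \<le> \<eta>\<^sup>2 * M\<^sup>2 * (norm x)\<^sup>2"
    by (simp add: mult_left_mono mult.assoc)
  moreover have "0 \<le> \<eta> * inner x d"
    using assms(1,3) by (simp add: inner_commute)
  ultimately show ?thesis
    by (simp add: power2_norm_diff algebra_simps)
qed

section \<open>Projections and the resolvent\<close>

lemma closest_point_eqI:
  fixes a x :: "'a::euclidean_space"
  assumes "convex S" "closed S" "x \<in> S" "\<And>y. y \<in> S \<Longrightarrow> inner (a - x) (y - x) \<le> 0"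
  shows "closest_point S a = x"
proof (rule closest_point_unique[OF assms(1-3), symmetric], intro ballI)
  fix y assume "y \<in> S"
  have "(norm (a - y))\<^sup>2 = (norm (a - x))\<^sup>2 - 2 * inner (a - x) (y - x) + (norm (y - x))\<^sup>2"
    using power2_norm_diff[of "a - x" "y - x"] by simp
  then have "(norm (a - x))\<^sup>2 \<le> (norm (a - y))\<^sup>2"
    using assms(4)[OF \<open>y \<in> S\<close>] zero_le_power2[of "norm (y - x)"] by linarith
  then show "dist a x \<le> dist a y"
    unfolding dist_norm by (rule power2_le_imp_le) simp
qed

lemma closest_point_vi_solution:
  fixes x g :: "'a::euclidean_space"
  assumes "convex S" "closed S" "x \<in> S" "\<forall>y\<in>S. inner g (y - x) \<ge> 0" "c \<ge> 0"
  shows "closest_point S (x - c *\<^sub>R g) = x"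
  using assms by (intro closest_point_eqI) auto

lemma closest_point_firmly_nonexpansive:
  fixes x y :: "'a::euclidean_space"
  assumes "convex S" "closed S" "S \<noteq> {}"
  shows "(norm (closest_point S x - closest_point S y))\<^sup>2
           \<le> inner (closest_point S x - closest_point S y) (x - y)"
proof -
  have "inner (x - closest_point S x) (closest_point S y - closest_point S x) \<le> 0"
    and "inner (y - closest_point S y) (closest_point S x - closest_point S y) \<le> 0"
    by (simp_all add: assms closest_point_dot closest_point_in_set)
  then show ?thesis
    unfolding power2_norm_eq_inner by (simp add: inner_diff_left inner_diff_right inner_commute)
qed

lemma power2_norm_diff_weighted:
  fixes z u w :: "'a::real_inner"
  assumes "1 + a \<noteq> 0"
  defines "c \<equiv> (1 / (1 + a)) *\<^sub>R (u + a *\<^sub>R w)"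
  shows "(norm (z - u))\<^sup>2 + a * (norm (z - w))\<^sup>2
           = (1 + a) * (norm (z - c))\<^sup>2 + ((norm u)\<^sup>2 + a * (norm w)\<^sup>2 - (1 + a) * (norm c)\<^sup>2)"
proof -
  have "(1 + a) *\<^sub>R c = u + a *\<^sub>R w"
    using assms by (simp add: c_def)
  then have "(1 + a) * inner z c = inner z u + a * inner z w"
    by (metis inner_add_right inner_scaleR_right)
  then show ?thesis
    by (simp add: power2_norm_diff algebra_simps)
qed

lemma resolv_eq_closest_point:
  fixes Z :: "'a::euclidean_space set"
  assumes "convex Z" "closed Z" "Z \<noteq> {}" "\<eta> > 0" "\<mu> > 0"
  shows "resolv Z \<eta> \<mu> w u = closest_point Z ((1 / (1 + \<eta> * \<mu>)) *\<^sub>R (u + (\<eta> * \<mu>) *\<^sub>R w))"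
    (is "_ = closest_point Z ?c")
proof -
  have "1 + \<eta> * \<mu> > 0"
    using assms(4,5) by (simp add: add_pos_pos)
  define C where "C = (norm u)\<^sup>2 + \<eta> * \<mu> * (norm w)\<^sup>2 - (1 + \<eta> * \<mu>) * (norm ?c)\<^sup>2"
  have objective: "1 / (2 * \<eta>) * (norm (z - u))\<^sup>2 + \<mu> / 2 * (norm (z - w))\<^sup>2
      = 1 / (2 * \<eta>) * ((1 + \<eta> * \<mu>) * (norm (z - ?c))\<^sup>2 + C)" for z
  proof -
    have "1 / (2 * \<eta>) * (norm (z - u))\<^sup>2 + \<mu> / 2 * (norm (z - w))\<^sup>2
        = 1 / (2 * \<eta>) * ((norm (z - u))\<^sup>2 + \<eta> * \<mu> * (norm (z - w))\<^sup>2)"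
      using assms(4) by (simp add: field_simps)
    also have "\<dots> = 1 / (2 * \<eta>) * ((1 + \<eta> * \<mu>) * (norm (z - ?c))\<^sup>2 + C)"
      using \<open>1 + \<eta> * \<mu> > 0\<close> by (subst power2_norm_diff_weighted) (simp_all add: C_def)
    finally show ?thesis .
  qed
  have monotone: "1 / (2 * \<eta>) * ((1 + \<eta> * \<mu>) * x + C) \<le> 1 / (2 * \<eta>) * ((1 + \<eta> * \<mu>) * y + C)
      \<longleftrightarrow> x \<le> y" for x y
    using assms(4) \<open>1 + \<eta> * \<mu> > 0\<close> by (simp add: divide_le_cancel mult_le_cancel_left_pos)
  show ?thesis
    unfolding resolv_def objective monotone
  proof (rule the_equality)
    show "closest_point Z ?c \<in> Z \<and> (\<forall>z\<in>Z. (norm (closest_point Z ?c - ?c))\<^sup>2 \<le> (norm (z - ?c))\<^sup>2)"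
      using closest_point_in_set[OF assms(2,3)] closest_point_le[OF assms(2), of _ ?c]
      by (auto simp: dist_norm norm_minus_commute intro: power_mono)
  next
    fix z' assume "z' \<in> Z \<and> (\<forall>z\<in>Z. (norm (z' - ?c))\<^sup>2 \<le> (norm (z - ?c))\<^sup>2)"
    then show "z' = closest_point Z ?c"
      by (intro closest_point_unique[OF assms(1,2)])
         (auto simp: dist_norm norm_minus_commute intro: power2_le_imp_le)
  qed
qed

lemma resolv_in:
  fixes Z :: "'a::euclidean_space set"
  assumes "convex Z" "closed Z" "Z \<noteq> {}" "\<eta> > 0" "\<mu> > 0"
  shows "resolv Z \<eta> \<mu> w u \<in> Z"
  using assms by (simp add: resolv_eq_closest_point closest_point_in_set)

lemma resolv_contraction:
  fixes Z :: "'a::euclidean_space set"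
  assumes "convex Z" "closed Z" "Z \<noteq> {}" "\<eta> > 0" "\<mu> > 0"
  shows "norm (resolv Z \<eta> \<mu> w u - resolv Z \<eta> \<mu> w v) \<le> norm (u - v) / (1 + \<eta> * \<mu>)"
proof -
  have "norm (resolv Z \<eta> \<mu> w u - resolv Z \<eta> \<mu> w v)
      \<le> norm ((1 / (1 + \<eta> * \<mu>)) *\<^sub>R (u + (\<eta> * \<mu>) *\<^sub>R w) - (1 / (1 + \<eta> * \<mu>)) *\<^sub>R (v + (\<eta> * \<mu>) *\<^sub>R w))"
    using closest_point_lipschitz[OF assms(1-3)] by (simp add: resolv_eq_closest_point assms dist_norm)
  also have "\<dots> = norm (u - v) / (1 + \<eta> * \<mu>)"
    using assms(4,5) by (simp add: scaleR_diff_right[symmetric] add_pos_pos)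
  finally show ?thesis .
qed

lemma resolv_vi_solution:
  fixes Z :: "'a::euclidean_space set"
  assumes "convex Z" "closed Z" "\<eta> > 0" "\<mu> > 0" "x \<in> Z" "\<forall>z\<in>Z. inner g (z - x) \<ge> 0"
  shows "resolv Z \<eta> \<mu> w (x - \<eta> *\<^sub>R (g - \<mu> *\<^sub>R (x - w))) = x"
proof -
  have "1 + \<eta> * \<mu> > 0"
    using assms(3,4) by (simp add: add_pos_pos)
  have "(1 / (1 + \<eta> * \<mu>)) *\<^sub>R ((x - \<eta> *\<^sub>R (g - \<mu> *\<^sub>R (x - w))) + (\<eta> * \<mu>) *\<^sub>R w)
      = (1 / (1 + \<eta> * \<mu>)) *\<^sub>R ((1 + \<eta> * \<mu>) *\<^sub>R x - \<eta> *\<^sub>R g)"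
    by (rule arg_cong[where f="scaleR _"]) (simp add: algebra_simps)
  also have "\<dots> = x - (\<eta> / (1 + \<eta> * \<mu>)) *\<^sub>R g"
    using \<open>1 + \<eta> * \<mu> > 0\<close> by (simp add: scaleR_diff_right)
  also have "closest_point Z \<dots> = x"
    using assms \<open>1 + \<eta> * \<mu> > 0\<close> by (intro closest_point_vi_solution) simp_all
  finally show ?thesis
    using assms by (subst resolv_eq_closest_point) auto
qed

section \<open>The gap function at a projected step\<close>

definition vi_gap :: "'a::real_inner set \<Rightarrow> ('a \<Rightarrow> 'a) \<Rightarrow> 'a \<Rightarrow> real" where
  "vi_gap Z F x = (SUP z\<in>Z. inner (F x) (x - z))"

lemma strongly_monotone_le_lipschitz:
  fixes F :: "'a::real_inner \<Rightarrow> 'a"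
  assumes "strongly_monotone_on Z \<mu> F" "L-lipschitz_on Z F" "x \<in> Z" "y \<in> Z" "x \<noteq> y"
  shows "\<mu> \<le> L"
proof -
  have "\<mu> * (norm (x - y))\<^sup>2 \<le> inner (F x - F y) (x - y)"
    using assms(1,3,4) by (simp add: strongly_monotone_on_def)
  also have "\<dots> \<le> norm (F x - F y) * norm (x - y)"
    by (rule norm_cauchy_schwarz)
  also have "\<dots> \<le> L * norm (x - y) * norm (x - y)"
    using lipschitz_onD[OF assms(2-4)] by (simp add: dist_norm mult_right_mono)
  finally have "\<mu> * (norm (x - y))\<^sup>2 \<le> L * (norm (x - y))\<^sup>2"
    by (simp add: power2_eq_square mult.assoc)
  then show ?thesis
    using assms(5) by simp
qed

lemma bdd_above_inner_diff:
  fixes Z :: "'a::real_inner set"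
  assumes "bounded Z"
  shows "bdd_above ((\<lambda>z. inner v (x - z)) ` Z)"
proof -
  obtain B where B: "\<forall>z\<in>Z. norm z \<le> B"
    using assms bounded_iff by blast
  have "inner v (x - z) \<le> norm v * (norm x + B)" if "z \<in> Z" for z
  proof -
    have "inner v (x - z) \<le> norm v * norm (x - z)"
      by (rule norm_cauchy_schwarz)
    also have "\<dots> \<le> norm v * (norm x + B)"
      using B that norm_triangle_ineq4[of x z] by (intro mult_left_mono) auto
    finally show ?thesis .
  qed
  then show ?thesis
    by (rule bdd_aboveI2)
qed

lemma strongly_monotone_le_vi_gap:
  fixes F :: "'a::real_inner \<Rightarrow> 'a"
  assumes "strongly_monotone_on Z \<mu> F" "bounded Z" "x \<in> Z"
    and "ws \<in> Z" "\<forall>z\<in>Z. inner (F ws) (z - ws) \<ge> 0"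
  shows "\<mu> * (norm (x - ws))\<^sup>2 \<le> vi_gap Z F x"
proof -
  have "\<mu> * (norm (x - ws))\<^sup>2 \<le> inner (F x - F ws) (x - ws)"
    using assms(1,3,4) by (simp add: strongly_monotone_on_def)
  also have "\<dots> \<le> inner (F x) (x - ws)"
    using assms(3,5) by (simp add: inner_diff_left)
  also have "\<dots> \<le> vi_gap Z F x"
    unfolding vi_gap_def using assms(4) bdd_above_inner_diff[OF assms(2)] by (rule cSUP_upper)
  finally show ?thesis .
qed

lemma closest_point_step_dist_le:
  fixes Z :: "'a::euclidean_space set"
  assumes "convex Z" "closed Z" "L-lipschitz_on Z F"
    and "ws \<in> Z" "\<forall>z\<in>Z. inner (F ws) (z - ws) \<ge> 0"
    and "u \<in> Z" "0 \<le> \<gamma>" "\<gamma> * L \<le> 1"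
  shows "norm (u - closest_point Z (u - \<gamma> *\<^sub>R F u)) \<le> sqrt 2 * norm (u - ws)"
proof -
  define d p where "d = u - ws" and "p = closest_point Z (u - \<gamma> *\<^sub>R F u) - ws"
  have "closest_point Z (ws - \<gamma> *\<^sub>R F ws) = ws"
    using assms by (intro closest_point_vi_solution) auto
  then have "(norm p)\<^sup>2 \<le> inner p (d - \<gamma> *\<^sub>R (F u - F ws))"
    using closest_point_firmly_nonexpansive[OF assms(1,2), of "u - \<gamma> *\<^sub>R F u" "ws - \<gamma> *\<^sub>R F ws"] assms(4)
    by (auto simp: p_def d_def algebra_simps)
  also have "\<dots> \<le> inner p d + \<gamma> * (norm p * (L * norm d))"
  proof -
    have "- inner p (F u - F ws) \<le> norm p * norm (F u - F ws)"
      using norm_cauchy_schwarz[of p "F ws - F u"] by (simp add: inner_diff_right norm_minus_commute)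
    also have "\<dots> \<le> norm p * (L * norm d)"
      using lipschitz_onD[OF assms(3,6,4)] by (simp add: d_def dist_norm mult_left_mono)
    finally have "\<gamma> * - inner p (F u - F ws) \<le> \<gamma> * (norm p * (L * norm d))"
      using assms(7) by (rule mult_left_mono)
    then show ?thesis
      by (simp add: algebra_simps)
  qed
  finally have "(norm (d - p))\<^sup>2 \<le> (norm d)\<^sup>2 + (\<gamma> * L * norm d)\<^sup>2"
    using zero_le_power2[of "\<gamma> * L * norm d - norm p"]
    unfolding power2_norm_diff power2_diff by (simp add: inner_commute algebra_simps)
  also have "\<dots> \<le> 2 * (norm d)\<^sup>2"
  proof -
    have "0 \<le> \<gamma> * L"
      using assms(7) lipschitz_on_nonneg[OF assms(3)] by simp
    then have "\<gamma> * L * norm d \<le> norm d"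
      using assms(8) by (simp add: mult_left_le_one_le)
    then have "(\<gamma> * L * norm d)\<^sup>2 \<le> (norm d)\<^sup>2"
      using \<open>0 \<le> \<gamma> * L\<close> by (intro power_mono) auto
    then show ?thesis
      by simp
  qed
  finally have "norm (d - p) \<le> sqrt (2 * (norm d)\<^sup>2)"
    by (rule real_le_rsqrt)
  then show ?thesis
    by (simp add: d_def p_def real_sqrt_mult)
qed

lemma closest_point_step_gap_le:
  fixes Z :: "'a::euclidean_space set"
  assumes "convex Z" "closed Z" "L-lipschitz_on Z F" "u \<in> Z" "z \<in> Z" "0 \<le> \<gamma>"
  defines "zb \<equiv> closest_point Z (u - \<gamma> *\<^sub>R F u)"
  shows "\<gamma> * inner (F zb) (zb - z) \<le> (1 + \<gamma> * L) * norm (u - zb) * norm (zb - z)"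
proof -
  have "zb \<in> Z"
    unfolding zb_def using assms(2,4) closest_point_in_set by blast
  have "inner (u - \<gamma> *\<^sub>R F u - zb) (z - zb) \<le> 0"
    unfolding zb_def using assms(1,2,5) by (rule closest_point_dot)
  then have "\<gamma> * inner (F u) (zb - z) \<le> inner (u - zb) (zb - z)"
    by (simp add: inner_commute algebra_simps)
  also have "\<dots> \<le> norm (u - zb) * norm (zb - z)"
    by (rule norm_cauchy_schwarz)
  finally have projection: "\<gamma> * inner (F u) (zb - z) \<le> norm (u - zb) * norm (zb - z)" .
  have "inner (F zb - F u) (zb - z) \<le> norm (F zb - F u) * norm (zb - z)"
    by (rule norm_cauchy_schwarz)
  also have "\<dots> \<le> L * norm (u - zb) * norm (zb - z)"
    using lipschitz_onD[OF assms(3) \<open>zb \<in> Z\<close> assms(4)]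
    by (simp add: dist_norm norm_minus_commute mult_right_mono)
  finally have "\<gamma> * inner (F zb - F u) (zb - z) \<le> \<gamma> * (L * norm (u - zb) * norm (zb - z))"
    using assms(6) by (rule mult_left_mono)
  with projection show ?thesis
    by (simp add: algebra_simps)
qed

lemma closest_point_step_inner_le:
  fixes Z :: "'a::euclidean_space set"
  assumes "convex Z" "closed Z" "L-lipschitz_on Z F" "0 < L"
    and "ws \<in> Z" "\<forall>z\<in>Z. inner (F ws) (z - ws) \<ge> 0"
    and "u \<in> Z" "z \<in> Z" "\<forall>z\<in>Z. \<forall>z'\<in>Z. norm (z - z') \<le> D"
  defines "zb \<equiv> closest_point Z (u - (1 / (sqrt 2 * L)) *\<^sub>R F u)"
  shows "inner (F zb) (zb - z) \<le> (2 + sqrt 2) * L * D * norm (u - ws)"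
proof -
  define \<gamma> where "\<gamma> = 1 / (sqrt 2 * L)"
  have "0 < \<gamma>" and "\<gamma> * L = 1 / sqrt 2" and "sqrt 2 * L * \<gamma> = 1"
    using assms(4) by (simp_all add: \<gamma>_def)
  have "zb \<in> Z"
    unfolding zb_def using assms(2,7) closest_point_in_set by blast
  have "\<gamma> * inner (F zb) (zb - z) \<le> (1 + \<gamma> * L) * norm (u - zb) * norm (zb - z)"
    unfolding zb_def \<gamma>_def[symmetric] using assms(1-3,7,8) \<open>0 < \<gamma>\<close>
    by (intro closest_point_step_gap_le) auto
  also have "\<dots> \<le> (1 + 1 / sqrt 2) * (sqrt 2 * norm (u - ws)) * D"
    using closest_point_step_dist_le[OF assms(1-3,5-7), of \<gamma>] assms(8,9) \<open>zb \<in> Z\<close>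
      \<open>0 < \<gamma>\<close> \<open>\<gamma> * L = 1 / sqrt 2\<close>
    by (intro mult_mono) (auto simp: zb_def \<gamma>_def[symmetric])
  finally have bound: "\<gamma> * inner (F zb) (zb - z) \<le> (1 + 1 / sqrt 2) * (sqrt 2 * norm (u - ws)) * D" .
  have "inner (F zb) (zb - z) = sqrt 2 * L * (\<gamma> * inner (F zb) (zb - z))"
    using \<open>sqrt 2 * L * \<gamma> = 1\<close> by (metis mult.assoc mult_1)
  also have "\<dots> \<le> sqrt 2 * L * ((1 + 1 / sqrt 2) * (sqrt 2 * norm (u - ws)) * D)"
    using bound assms(4) by (simp add: mult_left_mono)
  also have "\<dots> = (2 + sqrt 2) * L * D * norm (u - ws)"
    by (simp add: algebra_simps)
  finally show ?thesis .
qed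

text \<open>For \<open>L = 0\<close> the step size \<open>1 / (sqrt 2 * L)\<close> is \<open>0\<close>; this case is harmless since strong
  monotonicity forces \<open>\<mu> \<le> L\<close> as soon as \<open>Z\<close> has two points.\<close>

lemma vi_gap_closest_point_step_le:
  fixes Z :: "'a::euclidean_space set"
  assumes "convex Z" "closed Z" "L-lipschitz_on Z F" "strongly_monotone_on Z \<mu> F" "\<mu> > 0"
    and "ws \<in> Z" "\<forall>z\<in>Z. inner (F ws) (z - ws) \<ge> 0"
    and "u \<in> Z" "\<forall>z\<in>Z. \<forall>z'\<in>Z. norm (z - z') \<le> D"
  shows "vi_gap Z F (closest_point Z (u - (1 / (sqrt 2 * L)) *\<^sub>R F u))
           \<le> (2 + sqrt 2) * L * D * norm (u - ws)"
proof -
  define zb where "zb = closest_point Z (u - (1 / (sqrt 2 * L)) *\<^sub>R F u)"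
  have "zb \<in> Z"
    unfolding zb_def using assms(2,8) closest_point_in_set by blast
  have "inner (F zb) (zb - z) \<le> (2 + sqrt 2) * L * D * norm (u - ws)" if "z \<in> Z" for z
  proof (cases "z = zb")
    case True
    have "0 \<le> L" "0 \<le> D"
      using lipschitz_on_nonneg[OF assms(3)] assms(8,9) by force+
    with True show ?thesis
      by simp
  next
    case False
    then have "0 < L"
      using strongly_monotone_le_lipschitz[OF assms(4,3) that \<open>zb \<in> Z\<close>] assms(5) by simp
    then show ?thesis
      unfolding zb_def using assms that by (intro closest_point_step_inner_le) auto
  qed
  moreover have "Z \<noteq> {}"
    using assms(8) by blast
  ultimately show ?thesis
    unfolding vi_gap_def zb_def by (intro cSUP_least) auto
qed

section \<open>Finitely supported distributions\<close>

lemma expectation_le_sqrt_expectation_power2: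
  fixes f :: "'a \<Rightarrow> real"
  assumes "finite (set_pmf p)"
  shows "measure_pmf.expectation p f \<le> sqrt (measure_pmf.expectation p (\<lambda>x. (f x)\<^sup>2))"
proof (rule real_le_rsqrt)
  have "0 \<le> measure_pmf.variance p f"
    by (rule measure_pmf.variance_positive)
  also have "\<dots> = measure_pmf.expectation p (\<lambda>x. (f x)\<^sup>2) - (measure_pmf.expectation p f)\<^sup>2"
    using assms by (intro measure_pmf.variance_eq integrable_measure_pmf_finite)
  finally show "(measure_pmf.expectation p f)\<^sup>2 \<le> measure_pmf.expectation p (\<lambda>x. (f x)\<^sup>2)"
    by simp
qed

lemma finite_set_pmf_Pi_pmf:
  assumes "finite A" "\<And>i. i \<in> A \<Longrightarrow> finite (set_pmf (P i))"
  shows "finite (set_pmf (Pi_pmf A d P))"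
  using assms by (subst set_Pi_pmf) auto

lemma expectation_pair_pmf_iterated:
  fixes h :: "'a \<times> 'b \<Rightarrow> real"
  assumes "finite (set_pmf p)" "finite (set_pmf q)"
  shows "measure_pmf.expectation (pair_pmf p q) h
           = measure_pmf.expectation q (\<lambda>b. measure_pmf.expectation p (\<lambda>a. h (a, b)))"
proof -
  have "measure_pmf.expectation (pair_pmf p q) h
      = (\<Sum>x\<in>set_pmf p \<times> set_pmf q. h x * pmf (pair_pmf p q) x)"
    using assms by (intro integral_measure_pmf_real) auto
  also have "\<dots> = (\<Sum>a\<in>set_pmf p. \<Sum>b\<in>set_pmf q. h (a, b) * (pmf p a * pmf q b))"
    unfolding sum.cartesian_product by (intro sum.cong refl) (auto simp: pmf_pair)
  also have "\<dots> = (\<Sum>b\<in>set_pmf q. (\<Sum>a\<in>set_pmf p. h (a, b) * pmf p a) * pmf q b)"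
    by (subst sum.swap) (simp add: sum_distrib_right mult.assoc)
  also have "\<dots> = measure_pmf.expectation q (\<lambda>b. measure_pmf.expectation p (\<lambda>a. h (a, b)))"
    using assms by (simp add: integral_measure_pmf_real[of "set_pmf _"])
  finally show ?thesis .
qed

lemma expectation_Pi_pmf_resample:
  fixes \<Phi> :: "('i \<Rightarrow> 'a) \<Rightarrow> real"
  assumes "finite A" "k \<in> A" "\<And>i. finite (set_pmf (P i))"
  shows "measure_pmf.expectation (Pi_pmf A d P) \<Phi>
           = measure_pmf.expectation (Pi_pmf A d P) (\<lambda>f. measure_pmf.expectation (P k) (\<lambda>x. \<Phi> (f(k := x))))"
proof -
  let ?\<Psi> = "\<lambda>f. measure_pmf.expectation (P k) (\<lambda>x. \<Phi> (f(k := x)))"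
  let ?Q = "pair_pmf (P k) (Pi_pmf (A - {k}) d P)"
  have split: "Pi_pmf A d P = map_pmf (\<lambda>(y, f). f(k := y)) ?Q"
    using assms(1,2) Pi_pmf_insert[of "A - {k}" k d P] by (simp add: insert_absorb)
  have "measure_pmf.expectation (Pi_pmf A d P) \<Phi> = measure_pmf.expectation ?Q (\<lambda>(y, f). \<Phi> (f(k := y)))"
    unfolding split by (simp add: case_prod_unfold)
  also have "\<dots> = measure_pmf.expectation (Pi_pmf (A - {k}) d P) ?\<Psi>"
    using assms by (subst expectation_pair_pmf_iterated) (auto intro: finite_set_pmf_Pi_pmf)
  also have "\<dots> = measure_pmf.expectation ?Q (\<lambda>yf. ?\<Psi> (snd yf))"
    by (rule expectation_pair_pmf_snd[symmetric])
  also have "\<dots> = measure_pmf.expectation (Pi_pmf A d P) ?\<Psi>"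
    unfolding split by (simp add: case_prod_unfold)
  finally show ?thesis .
qed

section \<open>Analysis of the SVRG iteration\<close>

lemma lipschitz_on_avgF:
  fixes Fi :: "nat \<Rightarrow> 'a::real_normed_vector \<Rightarrow> 'a"
  assumes "n \<ge> 1" "\<forall>i<n. L-lipschitz_on Z (Fi i)"
  shows "L-lipschitz_on Z (avgF n Fi)"
proof (rule lipschitz_onI)
  show "0 \<le> L"
    using assms lipschitz_on_nonneg by auto
  fix x y assume "x \<in> Z" "y \<in> Z"
  have "dist (avgF n Fi x) (avgF n Fi y) = (1 / real n) * norm (\<Sum>i<n. Fi i x - Fi i y)"
    by (simp add: avgF_def dist_norm sum_subtractf scaleR_diff_right[symmetric])
  also have "\<dots> \<le> (1 / real n) * (\<Sum>i<n. L * dist x y)"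
    using assms(2) \<open>x \<in> Z\<close> \<open>y \<in> Z\<close>
    by (intro mult_left_mono order_trans[OF norm_sum sum_mono])
       (auto simp: dist_norm[symmetric] lipschitz_onD)
  also have "\<dots> = L * dist x y"
    using assms(1) by simp
  finally show "dist (avgF n Fi x) (avgF n Fi y) \<le> L * dist x y" .
qed

lemma lipschitz_on_shift:
  fixes f :: "'a::real_normed_vector \<Rightarrow> 'a"
  assumes "L-lipschitz_on Z f" "0 \<le> \<mu>"
  shows "(L + \<mu>)-lipschitz_on Z (\<lambda>x. f x - \<mu> *\<^sub>R (x - w))"
proof -
  have "(\<mu> * (1 + 0))-lipschitz_on Z (\<lambda>x. \<mu> *\<^sub>R (x - w))"
    by (intro lipschitz_on_cmult_nonneg lipschitz_on_diff lipschitz_on_id lipschitz_on_constant assms(2))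
  then show ?thesis
    using lipschitz_on_diff[OF assms(1)] by simp
qed

lemma svrg_inner_cong:
  "(\<And>j. j < s \<Longrightarrow> f j = g j) \<Longrightarrow> svrg_inner n Fi Z \<mu> \<eta> w wt f s = svrg_inner n Fi Z \<mu> \<eta> w wt g s"
  by (induction s) (auto simp: Let_def)

lemma svrg_outer_cong:
  "(\<And>j. j < t * S \<Longrightarrow> f j = g j) \<Longrightarrow> svrg_outer n Fi Z \<mu> \<eta> w w0 S f t = svrg_outer n Fi Z \<mu> \<eta> w w0 S g t"
proof (induction t)
  case (Suc t)
  then have "svrg_outer n Fi Z \<mu> \<eta> w w0 S f t = svrg_outer n Fi Z \<mu> \<eta> w w0 S g t"
    by simp
  moreover have "f (t * S + s) = g (t * S + s)" if "s < S" for s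
    using Suc.prems that by simp
  ultimately show ?case
    by (auto intro: svrg_inner_cong)
qed simp

text \<open>\<open>2/5\<close> dominates the fixed point \<open>2 / (5 + 4a)\<close> of the affine map
  \<open>c \<mapsto> (1 / (1 + a))\<^sup>2 ((1 + 3a/4) c + a/2)\<close>.\<close>

lemma svrg_rate_recursion_le:
  fixes a x :: real
  assumes "0 < a" "0 \<le> x"
  shows "(1 / (1 + a))\<^sup>2 * ((1 + 3 * a / 4) * (2/5 + 3/5 * x) + a / 2) \<le> 2/5 + 3/5 * (x / (1 + a))"
proof -
  have "2/5 * (1 + a)\<^sup>2 + 3/5 * x * (1 + a) - ((1 + 3 * a / 4) * (2/5 + 3/5 * x) + a / 2)
      = a * (2/5 * a + 3/20 * x)"
    by (simp add: power2_eq_square algebra_simps)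
  moreover have "0 \<le> a * (2/5 * a + 3/20 * x)"
    using assms by simp
  ultimately have "(1 + 3 * a / 4) * (2/5 + 3/5 * x) + a / 2 \<le> 2/5 * (1 + a)\<^sup>2 + 3/5 * x * (1 + a)"
    by linarith
  also have "\<dots> = (2/5 + 3/5 * (x / (1 + a))) * (1 + a)\<^sup>2"
    using assms(1) by (simp add: power2_eq_square field_simps)
  finally show ?thesis
    using assms(1) by (simp add: power_divide pos_divide_le_eq)
qed

locale svrg =
  fixes Z :: "'a::euclidean_space set" and n :: nat and Fi :: "nat \<Rightarrow> 'a \<Rightarrow> 'a"
    and L \<mu> \<eta> :: real and S :: nat and w ws :: 'a
  assumes convex_Z: "convex Z" and closed_Z: "closed Z"
    and n_ge_1: "n \<ge> 1" and lipschitz_Fi: "\<forall>i<n. L-lipschitz_on Z (Fi i)"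
    and mu_pos: "\<mu> > 0" and strongly_monotone: "strongly_monotone_on Z \<mu> (avgF n Fi)"
    and ws_in_Z: "ws \<in> Z" and ws_solves_vi: "\<forall>z\<in>Z. inner (avgF n Fi ws) (z - ws) \<ge> 0"
    and eta_def: "\<eta> = \<mu> / (4 * (L + \<mu>)\<^sup>2)"
    and S_def: "S = nat \<lceil>4 * ln 4 * (L + \<mu>)\<^sup>2 / \<mu>\<^sup>2\<rceil>"
begin

abbreviation F :: "'a \<Rightarrow> 'a" where "F \<equiv> avgF n Fi"
abbreviation B :: "'a \<Rightarrow> 'a" where "B \<equiv> svrgB n Fi \<mu> w"

text \<open>\<open>G i\<close> is \<open>n\<close> times the paper's \<open>B\<^sub>i\<close>, so that \<open>B\<close> is the mean of the \<open>G i\<close>.\<close>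

abbreviation G :: "nat \<Rightarrow> 'a \<Rightarrow> 'a" where "G i x \<equiv> Fi i x - \<mu> *\<^sub>R (x - w)"
abbreviation R :: "'a \<Rightarrow> 'a" where "R \<equiv> resolv Z \<eta> \<mu> w"

text \<open>\<open>snapshot w0 idx t\<close> is \<open>w\<^sub>t\<close> and \<open>iterate w0 idx t s\<close> is \<open>z\<^sub>s\<close> of epoch \<open>t\<close>, for the
  sample sequence \<open>idx\<close> drawn from \<open>samples T\<close>.\<close>

abbreviation samples :: "nat \<Rightarrow> (nat \<Rightarrow> nat) pmf" where
  "samples T \<equiv> Pi_pmf {..<T * S} 0 (\<lambda>_. pmf_of_set {..<n})"
abbreviation snapshot :: "'a \<Rightarrow> (nat \<Rightarrow> nat) \<Rightarrow> nat \<Rightarrow> 'a" where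
  "snapshot w0 idx t \<equiv> svrg_outer n Fi Z \<mu> \<eta> w w0 S idx t"
abbreviation iterate :: "'a \<Rightarrow> (nat \<Rightarrow> nat) \<Rightarrow> nat \<Rightarrow> nat \<Rightarrow> 'a" where
  "iterate w0 idx t s \<equiv> svrg_inner n Fi Z \<mu> \<eta> w (snapshot w0 idx t) (\<lambda>s. idx (t * S + s)) s"

lemma L_nonneg: "0 \<le> L"
  using lipschitz_Fi n_ge_1 lipschitz_on_nonneg by auto

lemma eta_pos: "0 < \<eta>"
  using L_nonneg mu_pos by (simp add: eta_def)

lemma eta_mu_pos: "0 < \<eta> * \<mu>"
  using eta_pos mu_pos by simp

lemma eta_sq: "\<eta>\<^sup>2 * (L + \<mu>)\<^sup>2 = \<eta> * \<mu> / 4"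
  using L_nonneg mu_pos by (simp add: eta_def power2_eq_square)

lemma Z_nonempty: "Z \<noteq> {}"
  using ws_in_Z by blast

lemma B_eq: "B = (\<lambda>x. F x - \<mu> *\<^sub>R (x - w))"
  by (simp add: svrgB_def fun_eq_iff)

lemma lipschitz_B: "(L + \<mu>)-lipschitz_on Z B"
  unfolding B_eq using lipschitz_on_avgF[OF n_ge_1 lipschitz_Fi] mu_pos by (intro lipschitz_on_shift) auto

lemma lipschitz_G: "i < n \<Longrightarrow> (L + \<mu>)-lipschitz_on Z (G i)"
  using lipschitz_Fi mu_pos by (intro lipschitz_on_shift) auto

lemma monotone_B:
  assumes "x \<in> Z" "y \<in> Z"
  shows "0 \<le> inner (B x - B y) (x - y)"
proof -
  have "\<mu> * (norm (x - y))\<^sup>2 \<le> inner (F x - F y) (x - y)"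
    using strongly_monotone assms by (simp add: strongly_monotone_on_def)
  then show ?thesis
    by (simp add: B_eq power2_norm_eq_inner algebra_simps)
qed

lemma sum_G: "(\<Sum>i<n. G i x) = real n *\<^sub>R B x"
  using n_ge_1 by (simp add: B_eq avgF_def sum_subtractf scaleR_diff_right sum_constant_scaleR)

lemma R_in_Z: "R u \<in> Z"
  using convex_Z closed_Z Z_nonempty eta_pos mu_pos by (rule resolv_in)

lemma R_contraction: "norm (R u - R v) \<le> norm (u - v) / (1 + \<eta> * \<mu>)"
  using convex_Z closed_Z Z_nonempty eta_pos mu_pos by (rule resolv_contraction)

lemma R_fixed_point: "R (ws - \<eta> *\<^sub>R B ws) = ws"
  using resolv_vi_solution[OF convex_Z closed_Z eta_pos mu_pos ws_in_Z ws_solves_vi] by (simp add: B_eq)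

lemma svrg_inner_Suc_eq:
  "svrg_inner n Fi Z \<mu> \<eta> w wt idx (Suc s) =
     R (svrg_inner n Fi Z \<mu> \<eta> w wt idx s
        - \<eta> *\<^sub>R (B wt - G (idx s) wt + G (idx s) (svrg_inner n Fi Z \<mu> \<eta> w wt idx s)))"
  using n_ge_1 by (simp add: Let_def svrgBi_def scaleR_diff_right)

lemma svrg_inner_in_Z: "wt \<in> Z \<Longrightarrow> svrg_inner n Fi Z \<mu> \<eta> w wt idx s \<in> Z"
  by (cases s) (simp_all add: Let_def R_in_Z)

lemma snapshot_in_Z: "w0 \<in> Z \<Longrightarrow> snapshot w0 idx t \<in> Z"
  by (induction t) (simp_all add: svrg_inner_in_Z)

lemma svrg_step_dist_le:
  "norm (R (z - \<eta> *\<^sub>R (B wt - G i wt + G i z)) - ws)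
     \<le> norm ((z - ws) - \<eta> *\<^sub>R (B z - B ws) - \<eta> *\<^sub>R ((G i z - G i wt) - (B z - B wt))) / (1 + \<eta> * \<mu>)"
proof -
  have "(z - \<eta> *\<^sub>R (B wt - G i wt + G i z)) - (ws - \<eta> *\<^sub>R B ws)
      = (z - ws) - \<eta> *\<^sub>R (B z - B ws) - \<eta> *\<^sub>R ((G i z - G i wt) - (B z - B wt))"
    by (simp add: algebra_simps)
  with R_contraction[of "z - \<eta> *\<^sub>R (B wt - G i wt + G i z)" "ws - \<eta> *\<^sub>R B ws"] show ?thesis
    unfolding R_fixed_point by simp
qed

lemma gradient_step_sq_le:
  assumes "z \<in> Z"
  shows "(norm ((z - ws) - \<eta> *\<^sub>R (B z - B ws)))\<^sup>2 \<le> (1 + \<eta> * \<mu> / 4) * (norm (z - ws))\<^sup>2"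
  using monotone_B[OF assms ws_in_Z] lipschitz_onD[OF lipschitz_B assms ws_in_Z] eta_pos
    power2_norm_monotone_step_le[of "B z - B ws" "z - ws" "L + \<mu>" \<eta>]
  by (simp add: dist_norm eta_sq)

lemma G_diff_sq_le:
  assumes "z \<in> Z" "wt \<in> Z" "i < n"
  shows "(norm (G i z - G i wt))\<^sup>2 \<le> (L + \<mu>)\<^sup>2 * (2 * (norm (z - ws))\<^sup>2 + 2 * (norm (wt - ws))\<^sup>2)"
proof -
  have "norm (G i z - G i wt) \<le> (L + \<mu>) * norm (z - wt)"
    using lipschitz_onD[OF lipschitz_G[OF assms(3)] assms(1,2)] by (simp add: dist_norm)
  then have "(norm (G i z - G i wt))\<^sup>2 \<le> (L + \<mu>)\<^sup>2 * (norm (z - wt))\<^sup>2"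
    by (metis norm_ge_zero power_mono power_mult_distrib)
  also have "\<dots> \<le> (L + \<mu>)\<^sup>2 * (2 * (norm (z - ws))\<^sup>2 + 2 * (norm (wt - ws))\<^sup>2)"
    using power2_norm_diff_le[of "z - ws" "wt - ws"] by (intro mult_left_mono) auto
  finally show ?thesis .
qed

text \<open>The stochastic correction has mean zero over \<open>i\<close>, so its variance adds to the deterministic
  part, and that variance is at most the second moment of the \<open>G i z - G i wt\<close>.\<close>

lemma svrg_step_sum_sq_le:
  assumes "z \<in> Z" "wt \<in> Z"
  shows "(\<Sum>i<n. (norm ((z - ws) - \<eta> *\<^sub>R (B z - B ws) - \<eta> *\<^sub>R ((G i z - G i wt) - (B z - B wt))))\<^sup>2)
     \<le> n * ((1 + 3 * (\<eta> * \<mu>) / 4) * (norm (z - ws))\<^sup>2 + \<eta> * \<mu> / 2 * (norm (wt - ws))\<^sup>2)"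
proof -
  define A where "A = (z - ws) - \<eta> *\<^sub>R (B z - B ws)"
  define Y where "Y = (\<lambda>i. G i z - G i wt)"
  define m where "m = B z - B wt"
  have sum_Y: "sum Y {..<n} = real n *\<^sub>R m"
    unfolding Y_def m_def using sum_subtractf[of "\<lambda>i. G i z" "\<lambda>i. G i wt" "{..<n}"] sum_G[of z] sum_G[of wt]
    by (simp only: scaleR_diff_right)
  have "(\<Sum>i<n. (norm (Y i - m))\<^sup>2) \<le> (\<Sum>i<n. (norm (Y i))\<^sup>2)"
    using sum_power2_norm_centered_le[of Y "{..<n}" m] sum_Y by simp
  also have "\<dots> \<le> (\<Sum>i<n. (L + \<mu>)\<^sup>2 * (2 * (norm (z - ws))\<^sup>2 + 2 * (norm (wt - ws))\<^sup>2))"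
    unfolding Y_def using assms by (intro sum_mono G_diff_sq_le) auto
  finally have "\<eta>\<^sup>2 * (\<Sum>i<n. (norm (Y i - m))\<^sup>2)
      \<le> \<eta>\<^sup>2 * (n * ((L + \<mu>)\<^sup>2 * (2 * (norm (z - ws))\<^sup>2 + 2 * (norm (wt - ws))\<^sup>2)))"
    by (simp add: mult_left_mono)
  also have "\<dots> = n * (\<eta> * \<mu> / 4 * (2 * (norm (z - ws))\<^sup>2 + 2 * (norm (wt - ws))\<^sup>2))"
    by (subst eta_sq[symmetric]) (simp add: mult_ac)
  finally have variance: "\<eta>\<^sup>2 * (\<Sum>i<n. (norm (Y i - m))\<^sup>2)
      \<le> n * (\<eta> * \<mu> / 4 * (2 * (norm (z - ws))\<^sup>2 + 2 * (norm (wt - ws))\<^sup>2))" .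
  have "(\<Sum>i<n. (norm (A - \<eta> *\<^sub>R (Y i - m)))\<^sup>2) = n * (norm A)\<^sup>2 + \<eta>\<^sup>2 * (\<Sum>i<n. (norm (Y i - m))\<^sup>2)"
    using sum_power2_norm_diff_mean_zero[of "\<lambda>i. \<eta> *\<^sub>R (Y i - m)" "{..<n}" A] sum_Y
    by (simp add: scaleR_sum_right[symmetric] sum_subtractf sum_constant_scaleR power_mult_distrib sum_distrib_left)
  also have "\<dots> \<le> n * ((1 + \<eta> * \<mu> / 4) * (norm (z - ws))\<^sup>2)
      + n * (\<eta> * \<mu> / 4 * (2 * (norm (z - ws))\<^sup>2 + 2 * (norm (wt - ws))\<^sup>2))"
    unfolding A_def using gradient_step_sq_le[OF assms(1)] variance by (intro add_mono mult_left_mono) auto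
  also have "\<dots> = n * ((1 + 3 * (\<eta> * \<mu>) / 4) * (norm (z - ws))\<^sup>2 + \<eta> * \<mu> / 2 * (norm (wt - ws))\<^sup>2)"
    by (simp add: algebra_simps)
  finally show ?thesis
    by (simp add: A_def Y_def m_def)
qed

lemma svrg_step_mean_sq_dist_le:
  assumes "z \<in> Z" "wt \<in> Z"
  shows "(\<Sum>i<n. (norm (R (z - \<eta> *\<^sub>R (B wt - G i wt + G i z)) - ws))\<^sup>2) / n
     \<le> (1 / (1 + \<eta> * \<mu>))\<^sup>2 * ((1 + 3 * (\<eta> * \<mu>) / 4) * (norm (z - ws))\<^sup>2 + \<eta> * \<mu> / 2 * (norm (wt - ws))\<^sup>2)"
    (is "_ \<le> ?\<rho> * ?bound")
proof -
  have "(\<Sum>i<n. (norm (R (z - \<eta> *\<^sub>R (B wt - G i wt + G i z)) - ws))\<^sup>2)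
      \<le> (\<Sum>i<n. ?\<rho> * (norm ((z - ws) - \<eta> *\<^sub>R (B z - B ws) - \<eta> *\<^sub>R ((G i z - G i wt) - (B z - B wt))))\<^sup>2)"
  proof (rule sum_mono)
    fix i
    have "(norm (R (z - \<eta> *\<^sub>R (B wt - G i wt + G i z)) - ws))\<^sup>2
        \<le> (norm ((z - ws) - \<eta> *\<^sub>R (B z - B ws) - \<eta> *\<^sub>R ((G i z - G i wt) - (B z - B wt))) / (1 + \<eta> * \<mu>))\<^sup>2"
      by (rule power_mono[OF svrg_step_dist_le norm_ge_zero])
    then show "(norm (R (z - \<eta> *\<^sub>R (B wt - G i wt + G i z)) - ws))\<^sup>2
        \<le> ?\<rho> * (norm ((z - ws) - \<eta> *\<^sub>R (B z - B ws) - \<eta> *\<^sub>R ((G i z - G i wt) - (B z - B wt))))\<^sup>2"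
      by (simp add: power_divide)
  qed
  also have "\<dots> \<le> ?\<rho> * (n * ?bound)"
    unfolding sum_distrib_left[symmetric] using svrg_step_sum_sq_le[OF assms] by (simp add: mult_left_mono)
  finally show ?thesis
    using n_ge_1 by (simp add: pos_divide_le_eq mult_ac)
qed

lemma finite_set_pmf_samples: "finite (set_pmf (samples T))"
  using n_ge_1 by (intro finite_set_pmf_Pi_pmf) (auto simp: lessThan_empty_iff)

lemma integrable_samples: "integrable (samples T) (f :: _ \<Rightarrow> real)"
  using finite_set_pmf_samples by (rule integrable_measure_pmf_finite)

text \<open>Redrawing the index of inner step \<open>s\<close> of epoch \<open>t\<close> changes neither \<open>z\<^sub>s\<close> nor \<open>w\<^sub>t\<close>.\<close>

lemma iterate_resample:
  "iterate w0 (idx(t * S + s := x)) t (Suc s)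
    = R (iterate w0 idx t s - \<eta> *\<^sub>R (B (snapshot w0 idx t) - G x (snapshot w0 idx t) + G x (iterate w0 idx t s)))"
proof -
  have "snapshot w0 (idx(t * S + s := x)) t = snapshot w0 idx t"
    by (rule svrg_outer_cong) simp
  moreover have "svrg_inner n Fi Z \<mu> \<eta> w wt (\<lambda>j. (idx(t * S + s := x)) (t * S + j)) s
      = svrg_inner n Fi Z \<mu> \<eta> w wt (\<lambda>j. idx (t * S + j)) s" for wt
    by (rule svrg_inner_cong) simp
  ultimately show ?thesis
    by (simp only: svrg_inner_Suc_eq fun_upd_same)
qed

lemma expectation_iterate_Suc_le:
  assumes "w0 \<in> Z" "t < T" "s < S"
  shows "measure_pmf.expectation (samples T) (\<lambda>idx. (norm (iterate w0 idx t (Suc s) - ws))\<^sup>2)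
    \<le> (1 / (1 + \<eta> * \<mu>))\<^sup>2 *
       ((1 + 3 * (\<eta> * \<mu>) / 4) * measure_pmf.expectation (samples T) (\<lambda>idx. (norm (iterate w0 idx t s - ws))\<^sup>2)
        + \<eta> * \<mu> / 2 * measure_pmf.expectation (samples T) (\<lambda>idx. (norm (snapshot w0 idx t - ws))\<^sup>2))"
proof -
  have "t * S + s < Suc t * S"
    using assms(3) by simp
  also have "\<dots> \<le> T * S"
    using assms(2) by (intro mult_right_mono) auto
  finally have "t * S + s < T * S" .
  then have "measure_pmf.expectation (samples T) (\<lambda>idx. (norm (iterate w0 idx t (Suc s) - ws))\<^sup>2)
      = measure_pmf.expectation (samples T) (\<lambda>idx. measure_pmf.expectation (pmf_of_set {..<n})
          (\<lambda>x. (norm (iterate w0 (idx(t * S + s := x)) t (Suc s) - ws))\<^sup>2))"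
    using n_ge_1 by (intro expectation_Pi_pmf_resample) (auto simp: lessThan_empty_iff)
  also have "\<dots> = measure_pmf.expectation (samples T) (\<lambda>idx. (\<Sum>i<n. (norm (R (iterate w0 idx t s
      - \<eta> *\<^sub>R (B (snapshot w0 idx t) - G i (snapshot w0 idx t) + G i (iterate w0 idx t s))) - ws))\<^sup>2) / n)"
    unfolding iterate_resample using n_ge_1 by (simp add: integral_pmf_of_set lessThan_empty_iff)
  also have "\<dots> \<le> measure_pmf.expectation (samples T) (\<lambda>idx. (1 / (1 + \<eta> * \<mu>))\<^sup>2 *
      ((1 + 3 * (\<eta> * \<mu>) / 4) * (norm (iterate w0 idx t s - ws))\<^sup>2
       + \<eta> * \<mu> / 2 * (norm (snapshot w0 idx t - ws))\<^sup>2))"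
    using assms(1)
    by (intro integral_mono integrable_samples svrg_step_mean_sq_dist_le svrg_inner_in_Z snapshot_in_Z)
  also have "\<dots> = (1 / (1 + \<eta> * \<mu>))\<^sup>2 *
       ((1 + 3 * (\<eta> * \<mu>) / 4) * measure_pmf.expectation (samples T) (\<lambda>idx. (norm (iterate w0 idx t s - ws))\<^sup>2)
        + \<eta> * \<mu> / 2 * measure_pmf.expectation (samples T) (\<lambda>idx. (norm (snapshot w0 idx t - ws))\<^sup>2))"
    by (simp add: integrable_samples)
  finally show ?thesis .
qed

lemma expectation_iterate_le:
  assumes "w0 \<in> Z" "t < T" "s \<le> S"
  shows "measure_pmf.expectation (samples T) (\<lambda>idx. (norm (iterate w0 idx t s - ws))\<^sup>2)
    \<le> (2/5 + 3/5 * (1 / (1 + \<eta> * \<mu>)) ^ s)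
       * measure_pmf.expectation (samples T) (\<lambda>idx. (norm (snapshot w0 idx t - ws))\<^sup>2)"
  using assms(3)
proof (induction s)
  case (Suc s)
  define X where "X = measure_pmf.expectation (samples T) (\<lambda>idx. (norm (snapshot w0 idx t - ws))\<^sup>2)"
  define \<rho> where "\<rho> = 1 / (1 + \<eta> * \<mu>)"
  have "0 \<le> X" and "0 < \<eta> * \<mu>"
    using eta_mu_pos by (simp_all add: X_def)
  have "measure_pmf.expectation (samples T) (\<lambda>idx. (norm (iterate w0 idx t (Suc s) - ws))\<^sup>2)
      \<le> \<rho>\<^sup>2 * ((1 + 3 * (\<eta> * \<mu>) / 4)
           * measure_pmf.expectation (samples T) (\<lambda>idx. (norm (iterate w0 idx t s - ws))\<^sup>2)
         + \<eta> * \<mu> / 2 * X)"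
    unfolding X_def \<rho>_def using assms(1,2) Suc.prems by (intro expectation_iterate_Suc_le) auto
  also have "\<dots> \<le> \<rho>\<^sup>2 * ((1 + 3 * (\<eta> * \<mu>) / 4) * ((2/5 + 3/5 * \<rho> ^ s) * X) + \<eta> * \<mu> / 2 * X)"
    using Suc \<open>0 < \<eta> * \<mu>\<close> by (intro mult_left_mono add_mono) (auto simp: X_def \<rho>_def)
  also have "\<dots> = \<rho>\<^sup>2 * ((1 + 3 * (\<eta> * \<mu>) / 4) * (2/5 + 3/5 * \<rho> ^ s) + \<eta> * \<mu> / 2) * X"
    by (simp add: algebra_simps)
  also have "\<dots> \<le> (2/5 + 3/5 * (\<rho> ^ s / (1 + \<eta> * \<mu>))) * X"
    using svrg_rate_recursion_le[OF \<open>0 < \<eta> * \<mu>\<close>, of "\<rho> ^ s"] \<open>0 \<le> X\<close>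
    unfolding \<rho>_def by (rule mult_right_mono) (use \<open>0 < \<eta> * \<mu>\<close> in simp)
  also have "\<rho> ^ s / (1 + \<eta> * \<mu>) = \<rho> ^ Suc s"
    by (simp add: \<rho>_def power_divide)
  finally show ?case
    by (simp add: X_def \<rho>_def)
qed simp

lemma epoch_factor_le: "2/5 + 3/5 * (1 / (1 + \<eta> * \<mu>)) ^ S \<le> 3/4"
proof -
  have "ln (1/4) \<le> 1/4 - (1::real)"
    by (rule ln_le_minus_one) simp
  then have "3/4 \<le> ln (4::real)"
    by (simp add: ln_div)
  also have "ln 4 = 4 * ln 4 * (L + \<mu>)\<^sup>2 / \<mu>\<^sup>2 * (\<eta> * \<mu>)"
    using L_nonneg mu_pos by (simp add: eta_def power2_eq_square)
  also have "\<dots> \<le> real S * (\<eta> * \<mu>)"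
    using eta_pos mu_pos by (intro mult_right_mono) (simp_all add: S_def real_nat_ceiling_ge)
  finally have "3/4 \<le> real S * (\<eta> * \<mu>)" .
  moreover have "1 + real S * (\<eta> * \<mu>) \<le> (1 + \<eta> * \<mu>) ^ S"
    using eta_mu_pos by (intro Bernoulli_inequality) simp
  ultimately have "12/7 \<le> (1 + \<eta> * \<mu>) ^ S"
    by linarith
  moreover have "0 < (1 + \<eta> * \<mu>) ^ S"
    using eta_mu_pos by simp
  ultimately have "(1 / (1 + \<eta> * \<mu>)) ^ S \<le> 7/12"
    by (simp add: power_divide divide_le_eq)
  then show ?thesis
    by linarith
qed

lemma expectation_snapshot_le:
  assumes "w0 \<in> Z" "norm (w0 - ws) \<le> D" "t \<le> T"
  shows "measure_pmf.expectation (samples T) (\<lambda>idx. (norm (snapshot w0 idx t - ws))\<^sup>2) \<le> (3/4) ^ t * D\<^sup>2"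
  using assms(3)
proof (induction t)
  case 0
  show ?case
    using assms(2) by (simp add: power_mono)
next
  case (Suc t)
  have "measure_pmf.expectation (samples T) (\<lambda>idx. (norm (snapshot w0 idx (Suc t) - ws))\<^sup>2)
      = measure_pmf.expectation (samples T) (\<lambda>idx. (norm (iterate w0 idx t S - ws))\<^sup>2)"
    by simp
  also have "\<dots> \<le> (2/5 + 3/5 * (1 / (1 + \<eta> * \<mu>)) ^ S)
      * measure_pmf.expectation (samples T) (\<lambda>idx. (norm (snapshot w0 idx t - ws))\<^sup>2)"
    using assms(1) Suc.prems by (intro expectation_iterate_le) auto
  also have "\<dots> \<le> 3/4 * ((3/4) ^ t * D\<^sup>2)"
    using Suc epoch_factor_le by (intro mult_mono) auto
  finally show ?case
    by simp
qed

abbreviation zbar :: "'a \<Rightarrow> (nat \<Rightarrow> nat) \<Rightarrow> nat \<Rightarrow> 'a" where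
  "zbar w0 idx T \<equiv> closest_point Z (snapshot w0 idx T - (1 / (sqrt 2 * L)) *\<^sub>R F (snapshot w0 idx T))"

lemma expectation_vi_gap_zbar_le:
  assumes "w0 \<in> Z" "\<forall>z\<in>Z. \<forall>z'\<in>Z. norm (z - z') \<le> D"
  shows "measure_pmf.expectation (samples T) (\<lambda>idx. vi_gap Z F (zbar w0 idx T))
           \<le> D\<^sup>2 * L * (2 + sqrt 2) * (sqrt 3 / 2) ^ T"
proof -
  have "0 \<le> D"
    using assms by force
  have "sqrt ((3/4) ^ T * D\<^sup>2) = (sqrt 3 / 2) ^ T * D"
    using \<open>0 \<le> D\<close> by (simp add: real_sqrt_mult real_sqrt_power real_sqrt_divide)
  have "measure_pmf.expectation (samples T) (\<lambda>idx. vi_gap Z F (zbar w0 idx T))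
      \<le> measure_pmf.expectation (samples T) (\<lambda>idx. (2 + sqrt 2) * L * D * norm (snapshot w0 idx T - ws))"
    using assms lipschitz_on_avgF[OF n_ge_1 lipschitz_Fi]
    by (intro integral_mono integrable_samples snapshot_in_Z
        vi_gap_closest_point_step_le[OF convex_Z closed_Z _ strongly_monotone mu_pos ws_in_Z ws_solves_vi])
       auto
  also have "\<dots> \<le> (2 + sqrt 2) * L * D
      * sqrt (measure_pmf.expectation (samples T) (\<lambda>idx. (norm (snapshot w0 idx T - ws))\<^sup>2))"
    using L_nonneg \<open>0 \<le> D\<close> finite_set_pmf_samples
    by (simp add: mult_left_mono expectation_le_sqrt_expectation_power2)
  also have "\<dots> \<le> (2 + sqrt 2) * L * D * sqrt ((3/4) ^ T * D\<^sup>2)"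
    using L_nonneg \<open>0 \<le> D\<close> assms expectation_snapshot_le[of w0 D T T]
    by (intro mult_left_mono real_sqrt_le_mono) (auto simp: ws_in_Z)
  also have "\<dots> = D\<^sup>2 * L * (2 + sqrt 2) * (sqrt 3 / 2) ^ T"
    using \<open>sqrt ((3/4) ^ T * D\<^sup>2) = (sqrt 3 / 2) ^ T * D\<close> by (simp add: power2_eq_square mult_ac)
  finally show ?thesis .
qed

lemma expectation_dist_zbar_le:
  assumes "w0 \<in> Z" "bounded Z"
  shows "\<mu> * measure_pmf.expectation (samples T) (\<lambda>idx. (norm (zbar w0 idx T - ws))\<^sup>2)
           \<le> measure_pmf.expectation (samples T) (\<lambda>idx. vi_gap Z F (zbar w0 idx T))"
  using assms closed_Z Z_nonempty
  by (subst integral_mult_right_zero[symmetric])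
     (intro integral_mono integrable_samples strongly_monotone_le_vi_gap strongly_monotone
       ws_in_Z ws_solves_vi closest_point_in_set)

end

theorem proposition14:
  fixes Z :: "'a::euclidean_space set"
    and Fi :: "nat \<Rightarrow> 'a \<Rightarrow> 'a"
    and n :: nat and D L \<mu> :: real and w w0 ws :: 'a and T :: nat
  assumes "convex Z" and "compact Z"
    and "\<forall>z\<in>Z. \<forall>z'\<in>Z. norm (z - z') \<le> D"
    and "n \<ge> 1"
    and "\<forall>i<n. L-lipschitz_on Z (Fi i)"
    and "\<mu> > 0"
    and "strongly_monotone_on Z \<mu> (avgF n Fi)"
    and "w \<in> Z" and "w0 \<in> Z" and "T \<ge> 1"
    and "ws \<in> Z" and "\<forall>z\<in>Z. avgF n Fi ws \<bullet> (z - ws) \<ge> 0"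
  shows "measure_pmf.expectation (svrg_samples n \<mu> L T)
           (\<lambda>idx. let zb = svrg_output n Fi Z \<mu> L w w0 T idx
                  in (SUP z\<in>Z. avgF n Fi zb \<bullet> (zb - z)))
         \<le> D\<^sup>2 * L * (2 + sqrt 2) * (sqrt 3 / 2) ^ T
       \<and> \<mu> * measure_pmf.expectation (svrg_samples n \<mu> L T)
           (\<lambda>idx. (norm (svrg_output n Fi Z \<mu> L w w0 T idx - ws))\<^sup>2)
         \<le> D\<^sup>2 * L * (2 + sqrt 2) * (sqrt 3 / 2) ^ T"
proof -
  interpret svrg Z n Fi L \<mu> "\<mu> / (4 * (L + \<mu>)\<^sup>2)" "nat \<lceil>4 * ln 4 * (L + \<mu>)\<^sup>2 / \<mu>\<^sup>2\<rceil>" w ws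
    using assms by unfold_locales (simp_all add: compact_imp_closed)
  have "svrg_samples n \<mu> L T = samples T"
    by (simp add: svrg_samples_def)
  moreover have "svrg_output n Fi Z \<mu> L w w0 T idx = zbar w0 idx T" for idx
    by (simp add: svrg_output_def Let_def)
  moreover note expectation_vi_gap_zbar_le[OF assms(9,3), of T]
  moreover note expectation_dist_zbar_le[OF assms(9) compact_imp_bounded[OF assms(2)], of T]
  ultimately show ?thesis
    by (simp add: vi_gap_def Let_def)
qed

end
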